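(* For every integer $n\ge 1$, \[ \sum_{k=1}^{n}(-1)^{k-1}\genfrac{\{}{\}}{0pt}{}{n}{k}(k-1)!\,H_{k}=B_{n-1}. \] For integers $n>1$, $m\ge 1$ with $n+m$ odd (and $n+m\ge 3$), \[ (-1)^{n-1}\frac{n-1}{2}B_{n+m-1}=\sum_{j=1}^{n}\sum_{k=1}^{m}(-1)^{k+j}\genfrac{\{}{\}}{0pt}{}{n}{j}\genfrac{\{}{\}}{0pt}{}{m}{k}\frac{j!\,k!\,H_{j}}{(k+j)(k+j+1)}. \]
   Context: $\genfrac{\{}{\}}{0pt}{}{n}{k}$ denotes the Stirling numbers of the second kind, $H_k=\sum_{i=1}^k 1/i$ the harmonic numbers, and $B_n$ the Bernoulli numbers, $\sum_{n\ge0}B_n t^n/n!=t/(e^t-1)$ (so $B_1=-1/2$). *)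

theory Defs
  imports "HOL-Analysis.Analysis" "HOL-Combinatorics.Stirling"
    "HOL-Computational_Algebra.Formal_Power_Series"
begin

text \<open>Bernoulli numbers via the exponential generating function
  sum B_n t^n / n! = t / (e^t - 1), so B_1 = -1/2.\<close>
definition bernoulli :: "nat \<Rightarrow> real" where
  "bernoulli n = fact n * fps_nth (fps_X / (fps_exp 1 - 1)) n"

end

theory Submission
  imports Defs "HOL-Computational_Algebra.Polynomial"
begin

(*
  Write P_n(x) = sum_k (-1)^k S(n,k) k! x^k and
  Q_n(x) = sum_k (-1)^(k+1) S(n,k+1) (k+1)! H_(k+1) x^k.
  The recurrence of the Stirling numbers becomes P_(n+1) = x(1-x) P_n' - x P_n, which implies
  x sum_k C(n,k) P_k = (x-1) P_n; integrated over [0,1] this is the recurrence of the Bernoulli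
  numbers, so int_0^1 P_n = B_n.  Together with H_(k+1) = H_k + 1/(k+1) it also gives
  Q_(n+1) = (x(1-x) Q_n)' - P_n, hence int_0^1 Q_(n+1) = -B_n: the first identity.

  The double sum of the second identity is int_0^1 (1-x) Q_n P_m.  Integration by parts moves one
  step from Q to P at the cost of a moment int_0^1 (1-x) P_i P_j.  Since P_n/x is even or odd
  under x -> 1-x, for i + j even and i, j >= 1 such a moment is half of
  int_0^1 x(1-x) (P_i/x) (P_j/x), which is +-B_(i+j) by repeated integration by parts; for i = 0
  it vanishes.  All integrals are formal, taken through an antiderivative.
*)

lemma bernoulli_recurrence:
  "(\<Sum>k<n. real (n choose k) * bernoulli k) = (if n = 1 then 1 else 0)"
proof -
  define b :: "real fps" where "b = fps_X / (fps_exp 1 - 1)"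
  have "subdegree (fps_exp 1 - 1 :: real fps) = 1"
    by (rule subdegreeI) (auto simp: fps_exp_def)
  then have "b * (fps_exp 1 - 1) = fps_X"
    unfolding b_def by (subst fps_times_divide_eq) auto
  moreover have "fps_nth (b * (fps_exp 1 - 1)) n = (\<Sum>k<n. fps_nth b k / fact (n - k))"
    by (simp add: fps_mult_nth fps_exp_def atLeast0AtMost lessThan_Suc_atMost[symmetric]
        sum.lessThan_Suc right_diff_distrib sum_subtractf)
  moreover have "(\<Sum>k<n. real (n choose k) * bernoulli k)
      = fact n * (\<Sum>k<n. fps_nth b k / fact (n - k))"
    unfolding sum_distrib_left
    by (rule sum.cong) (simp_all add: binomial_fact bernoulli_def b_def)
  ultimately show ?thesis
    by (cases "n = 1") simp_all
qed

section \<open>Formal integration over [0, 1]\<close>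

definition antideriv :: "'a::field_char_0 poly \<Rightarrow> 'a poly" where
  "antideriv p = (\<Sum>i\<le>degree p. monom (coeff p i / of_nat (Suc i)) (Suc i))"

lemma pderiv_antideriv [simp]: "pderiv (antideriv p) = p"
proof -
  have "pderiv (antideriv p) = (\<Sum>i\<le>degree p. monom (coeff p i) i)"
    unfolding antideriv_def higher_pderiv_sum[where n = 1, simplified]
    by (simp add: pderiv_monom del: of_nat_Suc)
  also have "\<dots> = p"
    by (rule poly_as_sum_of_monoms)
  finally show ?thesis .
qed

definition integral01 :: "'a::field_char_0 poly \<Rightarrow> 'a" where
  "integral01 p = poly (antideriv p) 1 - poly (antideriv p) 0"

lemma integral01_antiderivative:
  assumes "pderiv q = p"
  shows "integral01 p = poly q 1 - poly q 0"
proof -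
  have "pderiv (q - antideriv p) = 0"
    using assms by (simp add: pderiv_diff)
  then obtain c where "q = antideriv p + [:c:]"
    by (metis pderiv_iszero diff_add_cancel add.commute)
  then show ?thesis
    by (simp add: integral01_def)
qed

lemma integral01_pderiv: "integral01 (pderiv q) = poly q 1 - poly q 0"
  by (rule integral01_antiderivative) (rule refl)

lemma integral01_0 [simp]: "integral01 0 = 0"
  using integral01_pderiv[of 0] by simp

lemma integral01_add: "integral01 (p + q) = integral01 p + integral01 q"
  using integral01_pderiv[of "antideriv p + antideriv q"]
  by (simp add: pderiv_add integral01_def)

lemma integral01_uminus: "integral01 (- p) = - integral01 p"
  using integral01_pderiv[of "- antideriv p"]
  by (simp add: pderiv_minus integral01_def)

lemma integral01_diff: "integral01 (p - q) = integral01 p - integral01 q"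
  using integral01_add[of p "- q"] by (simp add: integral01_uminus)

lemma integral01_smult: "integral01 (smult c p) = c * integral01 p"
  using integral01_pderiv[of "smult c (antideriv p)"]
  by (simp add: pderiv_smult integral01_def algebra_simps)

lemma integral01_sum: "integral01 (\<Sum>x\<in>A. f x) = (\<Sum>x\<in>A. integral01 (f x))"
  by (induction A rule: infinite_finite_induct) (simp_all add: integral01_add)

lemma integral01_monom: "integral01 (monom c n) = c / of_nat (Suc n)"
  using integral01_antiderivative[of "monom (c / of_nat (Suc n)) (Suc n)"]
  by (simp add: pderiv_monom poly_monom del: of_nat_Suc)

lemma integral01_by_parts:
  "integral01 (p * pderiv q) = poly (p * q) 1 - poly (p * q) 0 - integral01 (pderiv p * q)"
  using integral01_pderiv[of "p * q"] by (simp add: pderiv_mult integral01_add algebra_simps)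

definition X_poly :: "'a::comm_ring_1 poly" where
  "X_poly = [:0, 1:]"

lemma poly_X_poly [simp]: "poly X_poly x = x"
  by (simp add: X_poly_def)

lemma pderiv_X_poly [simp]: "pderiv X_poly = 1"
  by (simp add: X_poly_def pderiv_pCons)

lemma pcompose_X_poly [simp]: "pcompose X_poly q = q"
  by (simp add: X_poly_def pcompose_pCons)

lemma coeff_X_poly_mult: "coeff (X_poly * p) i = (if i = 0 then 0 else coeff p (i - 1))"
  by (simp add: X_poly_def coeff_pCons split: nat.split)

(* A constant rather than 1 - X_poly, so that algebra_simps does not distribute it. *)
definition one_minus_X :: "'a::comm_ring_1 poly" where
  "one_minus_X = [:1, -1:]"

lemma one_minus_X_eq: "one_minus_X = 1 - X_poly"
  by (simp add: one_minus_X_def X_poly_def one_pCons)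

lemma poly_one_minus_X [simp]: "poly one_minus_X x = 1 - x"
  by (simp add: one_minus_X_def)

lemma pderiv_one_minus_X [simp]: "pderiv (one_minus_X :: 'a::idom poly) = -1"
  by (simp add: one_minus_X_eq pderiv_diff)

lemma pcompose_one_minus_X [simp]: "pcompose one_minus_X one_minus_X = X_poly"
  by (simp add: one_minus_X_eq pcompose_diff pcompose_1)

lemma X_poly_add_one_minus_X: "X_poly + one_minus_X = 1"
  by (simp add: one_minus_X_eq)

lemma integral01_one_minus_X_mult_monom:
  "integral01 (one_minus_X * monom c n) = c / (of_nat (Suc n) * of_nat (Suc (Suc n)))"
proof -
  have expand: "one_minus_X * monom c n = monom c n - monom c (Suc n)"
    by (simp add: one_minus_X_eq X_poly_def monom_Suc left_diff_distrib)
  show ?thesis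
    unfolding expand integral01_diff integral01_monom
    by (simp add: field_simps del: of_nat_Suc) (simp add: algebra_simps)
qed

lemma integral01_reflect: "integral01 (pcompose p one_minus_X) = integral01 p"
proof -
  have "pderiv (pcompose (antideriv p) one_minus_X) = - pcompose p one_minus_X"
    by (simp add: pderiv_pcompose)
  then have "integral01 (- pcompose p one_minus_X) = poly (antideriv p) 0 - poly (antideriv p) 1"
    by (simp add: integral01_antiderivative poly_pcompose)
  then show ?thesis
    unfolding integral01_uminus integral01_def[of p] by (metis minus_diff_eq minus_minus)
qed

lemma integral01_eq_0_if_reflect_odd:
  assumes "pcompose p one_minus_X = - p"
  shows "integral01 p = 0"
  using integral01_reflect[of p] by (simp add: assms integral01_uminus)

section \<open>Fubini polynomials\<close>

definition fubini_step :: "'a::idom poly \<Rightarrow> 'a poly" where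
  "fubini_step p = X_poly * one_minus_X * pderiv p - X_poly * p"

lemma fubini_step_add: "fubini_step (p + q) = fubini_step p + fubini_step q"
  by (simp add: fubini_step_def pderiv_add algebra_simps)

lemma fubini_step_of_nat_mult: "fubini_step (of_nat c * p) = of_nat c * fubini_step p"
  by (simp add: fubini_step_def pderiv_mult algebra_simps)

lemma fubini_step_sum: "fubini_step (\<Sum>k\<in>A. f k) = (\<Sum>k\<in>A. fubini_step (f k))"
  by (induction A rule: infinite_finite_induct)
     (simp_all add: fubini_step_add fubini_step_def[of 0])

lemma coeff_fubini_step:
  "coeff (fubini_step p) i = of_nat i * (coeff p i - (if i = 0 then 0 else coeff p (i - 1)))"
  by (cases i; cases "i - 1")
     (simp_all add: fubini_step_def one_minus_X_eq mult.assoc coeff_X_poly_mult coeff_pderiv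
        algebra_simps)

lemma coeff_pderiv_X_poly_one_minus_X_mult:
  "coeff (pderiv (X_poly * one_minus_X * p)) i
     = of_nat (Suc i) * (coeff p i - (if i = 0 then 0 else coeff p (i - 1)))"
  by (cases i)
     (simp_all add: one_minus_X_eq mult.assoc coeff_X_poly_mult coeff_pderiv algebra_simps)

definition fubini_poly :: "nat \<Rightarrow> real poly" where
  "fubini_poly n = (\<Sum>k\<le>n. monom ((-1) ^ k * real (Stirling n k) * fact k) k)"

definition fubini_quot :: "nat \<Rightarrow> real poly" where
  "fubini_quot n = (\<Sum>k<n. monom ((-1) ^ Suc k * real (Stirling n (Suc k)) * fact (Suc k)) k)"

definition harmonic_fubini_quot :: "nat \<Rightarrow> real poly" where
  "harmonic_fubini_quot n =
     (\<Sum>k<n. monom ((-1) ^ Suc k * real (Stirling n (Suc k)) * fact (Suc k) * harm (Suc k)) k)"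

lemma coeff_fubini_poly: "coeff (fubini_poly n) k = (-1) ^ k * real (Stirling n k) * fact k"
  by (simp add: fubini_poly_def coeff_sum coeff_monom)

lemma coeff_fubini_quot:
  "coeff (fubini_quot n) k = (-1) ^ Suc k * real (Stirling n (Suc k)) * fact (Suc k)"
  by (simp add: fubini_quot_def coeff_sum coeff_monom)

lemma coeff_harmonic_fubini_quot:
  "coeff (harmonic_fubini_quot n) k
     = (-1) ^ Suc k * real (Stirling n (Suc k)) * fact (Suc k) * harm (Suc k)"
  by (simp add: harmonic_fubini_quot_def coeff_sum coeff_monom)

lemma fubini_poly_0: "fubini_poly 0 = 1"
  by (simp add: fubini_poly_def)

lemma fubini_poly_Suc: "fubini_poly (Suc n) = fubini_step (fubini_poly n)"
proof (rule poly_eqI)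
  fix i
  show "coeff (fubini_poly (Suc n)) i = coeff (fubini_step (fubini_poly n)) i"
    unfolding coeff_fubini_step coeff_fubini_poly by (cases i) (simp_all add: algebra_simps)
qed

lemma fubini_poly_1: "fubini_poly (Suc 0) = - X_poly"
  by (simp add: fubini_poly_Suc fubini_poly_0 fubini_step_def)

lemma fubini_poly_eq_X_poly_mult_fubini_quot:
  assumes "n \<ge> 1"
  shows "fubini_poly n = X_poly * fubini_quot n"
proof -
  obtain n' where "n = Suc n'"
    using assms by (cases n) auto
  then show ?thesis
    by (intro poly_eqI)
       (simp add: coeff_X_poly_mult coeff_fubini_poly coeff_fubini_quot split: nat.split)
qed

lemma fubini_quot_Suc:
  assumes "n \<ge> 1"
  shows "fubini_quot (Suc n) = pderiv (X_poly * one_minus_X * fubini_quot n)"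
proof (rule poly_eqI)
  fix i
  obtain n' where "n = Suc n'"
    using assms by (cases n) auto
  then show "coeff (fubini_quot (Suc n)) i
      = coeff (pderiv (X_poly * one_minus_X * fubini_quot n)) i"
    unfolding coeff_pderiv_X_poly_one_minus_X_mult coeff_fubini_quot
    by (cases i) (simp_all add: algebra_simps)
qed

lemma harmonic_fubini_quot_Suc:
  "harmonic_fubini_quot (Suc n)
     = pderiv (X_poly * one_minus_X * harmonic_fubini_quot n) - fubini_poly n"
proof (rule poly_eqI)
  fix i
  have harm: "harm (Suc i) = harm i + 1 / (1 + real i)"
    by (simp add: harm_Suc field_simps)
  have Stirling: "real (Stirling (Suc n) (Suc i))
      = (1 + real i) * real (Stirling n (Suc i)) + real (Stirling n i)"
    by (simp add: algebra_simps)
  have fact: "(fact (Suc i) :: real) = (1 + real i) * fact i"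
    by simp
  have "(-1) ^ Suc i * real (Stirling (Suc n) (Suc i)) * fact (Suc i) * harm (Suc i)
      = of_nat (Suc i) * ((-1) ^ Suc i * real (Stirling n (Suc i)) * fact (Suc i) * harm (Suc i)
         - (-1) ^ i * real (Stirling n i) * fact i * harm i)
        - (-1) ^ i * real (Stirling n i) * fact i"
    unfolding harm Stirling fact by (simp add: field_simps)
  then show "coeff (harmonic_fubini_quot (Suc n)) i
      = coeff (pderiv (X_poly * one_minus_X * harmonic_fubini_quot n) - fubini_poly n) i"
    unfolding coeff_diff coeff_pderiv_X_poly_one_minus_X_mult coeff_harmonic_fubini_quot
      coeff_fubini_poly
    by (cases i) (simp_all add: harm_altdef[of 0])
qed

lemma integral01_fubini_quot:
  assumes "n \<ge> 2"
  shows "integral01 (fubini_quot n) = 0"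
proof -
  obtain n' where "n = Suc n'" "n' \<ge> 1"
    using assms by (cases n) auto
  then show ?thesis
    by (simp add: fubini_quot_Suc integral01_pderiv)
qed

lemma integral01_harmonic_fubini_quot:
  "integral01 (harmonic_fubini_quot (Suc n)) = - integral01 (fubini_poly n)"
  by (simp add: harmonic_fubini_quot_Suc integral01_diff integral01_pderiv)

lemma sum_choose_Suc_mult:
  fixes f :: "nat \<Rightarrow> 'a::comm_semiring_1"
  shows "(\<Sum>k\<le>Suc n. of_nat (Suc n choose k) * f k)
       = (\<Sum>k\<le>n. of_nat (n choose k) * (f k + f (Suc k)))"
proof -
  have shift: "(\<Sum>k\<le>n. of_nat (n choose k) * f k)
      = f 0 + (\<Sum>k\<le>n. of_nat (n choose Suc k) * f (Suc k))"
  proof -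
    have "(\<Sum>k\<le>n. of_nat (n choose k) * f k) = (\<Sum>k\<le>Suc n. of_nat (n choose k) * f k)"
      by (simp add: sum.atMost_Suc binomial_eq_0)
    also have "\<dots> = f 0 + (\<Sum>k\<le>n. of_nat (n choose Suc k) * f (Suc k))"
      by (subst sum.atMost_Suc_shift) simp
    finally show ?thesis .
  qed
  have "(\<Sum>k\<le>Suc n. of_nat (Suc n choose k) * f k)
      = f 0 + (\<Sum>k\<le>n. of_nat (Suc n choose Suc k) * f (Suc k))"
    by (subst sum.atMost_Suc_shift) simp
  also have "\<dots> = (\<Sum>k\<le>n. of_nat (n choose k) * f (Suc k))
      + (f 0 + (\<Sum>k\<le>n. of_nat (n choose Suc k) * f (Suc k)))"
    by (simp add: distrib_right sum.distrib algebra_simps)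
  also have "\<dots> = (\<Sum>k\<le>n. of_nat (n choose k) * (f k + f (Suc k)))"
    by (simp add: shift[symmetric] distrib_left sum.distrib add.commute)
  finally show ?thesis .
qed

definition binomial_fubini_sum :: "nat \<Rightarrow> real poly" where
  "binomial_fubini_sum n = (\<Sum>k\<le>n. of_nat (n choose k) * fubini_poly k)"

lemma binomial_fubini_sum_Suc:
  "binomial_fubini_sum (Suc n) = fubini_step (binomial_fubini_sum n) + binomial_fubini_sum n"
  unfolding binomial_fubini_sum_def sum_choose_Suc_mult
  by (simp add: fubini_poly_Suc fubini_step_sum fubini_step_of_nat_mult distrib_left sum.distrib)

lemma X_poly_mult_binomial_fubini_sum:
  "n \<ge> 1 \<Longrightarrow> X_poly * binomial_fubini_sum n = (X_poly - 1) * fubini_poly n"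
proof (induction n rule: dec_induct)
  case base
  show ?case
    by (simp add: binomial_fubini_sum_def fubini_poly_0 fubini_poly_1 algebra_simps)
next
  case (step n)
  define A where "A = binomial_fubini_sum n"
  define P where "P = fubini_poly n"
  have "A + X_poly * pderiv A = P + (X_poly - 1) * pderiv P"
    using arg_cong[OF step.IH, of pderiv]
    by (simp add: A_def P_def pderiv_mult pderiv_diff algebra_simps)
  then have "X_poly * (fubini_step A + A) = (X_poly - 1) * fubini_step P"
    unfolding fubini_step_def one_minus_X_eq by algebra
  then show ?case
    by (simp add: A_def P_def binomial_fubini_sum_Suc fubini_poly_Suc)
qed

lemma sum_choose_integral01_fubini_poly:
  assumes "n \<ge> 2"
  shows "(\<Sum>k<n. real (n choose k) * integral01 (fubini_poly k)) = 0"
proof -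
  define R where "R = (\<Sum>k<n. of_nat (n choose k) * fubini_poly k)"
  have "binomial_fubini_sum n = R + fubini_poly n"
    by (simp add: binomial_fubini_sum_def R_def lessThan_Suc_atMost[symmetric] sum.lessThan_Suc)
  then have "X_poly * R = X_poly * (- fubini_quot n)"
    using X_poly_mult_binomial_fubini_sum[of n] fubini_poly_eq_X_poly_mult_fubini_quot[of n] assms
    by (simp add: algebra_simps)
  then have "R = - fubini_quot n"
    by (simp add: X_poly_def)
  then have "integral01 R = 0"
    using assms by (simp add: integral01_uminus integral01_fubini_quot)
  then show ?thesis
    by (simp add: R_def integral01_sum of_nat_poly integral01_smult)
qed

(* Both sides satisfy the same recurrence, whose last coefficient C(n+1, n) is nonzero. *)
lemma integral01_fubini_poly: "integral01 (fubini_poly n) = bernoulli n"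
proof (induction n rule: less_induct)
  case (less n)
  show ?case
  proof (cases n)
    case 0
    then show ?thesis
      using bernoulli_recurrence[of 1] integral01_monom[of 1 0] by (simp add: fubini_poly_0)
  next
    case (Suc n')
    have "(\<Sum>k<Suc n. real (Suc n choose k) * integral01 (fubini_poly k))
        = (\<Sum>k<Suc n. real (Suc n choose k) * bernoulli k)"
      using sum_choose_integral01_fubini_poly[of "Suc n"] bernoulli_recurrence[of "Suc n"] Suc
      by simp
    moreover have "(\<Sum>k<n. real (Suc n choose k) * integral01 (fubini_poly k))
        = (\<Sum>k<n. real (Suc n choose k) * bernoulli k)"
      using less by simp
    ultimately show ?thesis
      by simp
  qed
qed

lemma sum_Stirling_fact_harm:
  assumes "n \<ge> 1"
  shows "(\<Sum>k=1..n. (-1) ^ (k - 1) * real (Stirling n k) * fact (k - 1) * harm k)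
       = bernoulli (n - 1)"
proof -
  obtain n' where n: "n = Suc n'"
    using assms by (cases n) auto
  have "(\<Sum>k=1..n. (-1) ^ (k - 1) * real (Stirling n k) * fact (k - 1) * harm k)
      = (\<Sum>k<n. (-1) ^ k * real (Stirling n (Suc k)) * fact k * harm (Suc k))"
    by (rule sum.reindex_bij_witness[of _ Suc "\<lambda>k. k - 1"]) auto
  also have "\<dots> = - integral01 (harmonic_fubini_quot n)"
    unfolding harmonic_fubini_quot_def integral01_sum integral01_monom sum_negf[symmetric]
    by (rule sum.cong) (simp_all add: field_simps)
  also have "\<dots> = bernoulli (n - 1)"
    by (simp add: n integral01_harmonic_fubini_quot integral01_fubini_poly)
  finally show ?thesis .
qed

section \<open>Moments against 1 - x\<close>

definition harmonic_moment :: "nat \<Rightarrow> nat \<Rightarrow> real" where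
  "harmonic_moment n m = integral01 (one_minus_X * harmonic_fubini_quot n * fubini_poly m)"

definition fubini_moment :: "nat \<Rightarrow> nat \<Rightarrow> real" where
  "fubini_moment a b = integral01 (one_minus_X * fubini_poly a * fubini_poly b)"

definition fubini_quot_moment :: "nat \<Rightarrow> nat \<Rightarrow> real" where
  "fubini_quot_moment a b = integral01 (X_poly * one_minus_X * fubini_quot a * fubini_quot b)"

lemma harmonic_moment_Suc:
  "harmonic_moment (Suc n) m = - harmonic_moment n (Suc m) - fubini_moment n m"
proof -
  let ?Q = "X_poly * one_minus_X * harmonic_fubini_quot n"
  have "harmonic_moment (Suc n) m
      = integral01 ((one_minus_X * fubini_poly m) * pderiv ?Q) - fubini_moment n m"
    by (simp add: harmonic_moment_def fubini_moment_def harmonic_fubini_quot_Suc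
        integral01_diff algebra_simps)
  also have "integral01 ((one_minus_X * fubini_poly m) * pderiv ?Q)
      = - integral01 (pderiv (one_minus_X * fubini_poly m) * ?Q)"
    by (simp add: integral01_by_parts)
  also have "pderiv (one_minus_X * fubini_poly m) * ?Q
      = one_minus_X * harmonic_fubini_quot n * fubini_poly (Suc m)"
    by (simp add: fubini_poly_Suc fubini_step_def pderiv_mult pderiv_diff algebra_simps)
  finally show ?thesis
    by (simp add: harmonic_moment_def)
qed

lemma harmonic_moment_eq_sum:
  "harmonic_moment n m = (\<Sum>i<n. (-1) ^ (n + i) * fubini_moment i (n + m - 1 - i))"
proof (induction n arbitrary: m)
  case 0
  then show ?case
    by (simp add: harmonic_moment_def harmonic_fubini_quot_def)
next
  case (Suc n)
  then show ?case
    by (simp add: harmonic_moment_Suc sum.lessThan_Suc sum_negf[symmetric])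
qed

lemma fubini_quot_1: "fubini_quot (Suc 0) = - 1"
  by (rule poly_eqI) (simp add: coeff_fubini_quot)

lemma fubini_quot_reflect:
  "a \<ge> 1 \<Longrightarrow>
     pcompose (fubini_quot a) one_minus_X = smult ((-1) ^ Suc a) (fubini_quot a)"
proof (induction a rule: dec_induct)
  case base
  show ?case
    by (simp add: fubini_quot_1 pcompose_uminus pcompose_1 one_pCons)
next
  case (step a)
  define h where "h = X_poly * one_minus_X * fubini_quot a"
  have h_reflect: "pcompose h one_minus_X = smult ((-1) ^ Suc a) h"
    by (simp add: h_def step.IH pcompose_mult algebra_simps)
  have "pcompose (pderiv h) one_minus_X = smult ((-1) ^ Suc (Suc a)) (pderiv h)"
    using arg_cong[OF h_reflect, of pderiv] by (simp add: pderiv_pcompose pderiv_smult pderiv_minus)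
  then show ?case
    unfolding h_def fubini_quot_Suc[OF step.hyps(1)] by simp
qed

lemma fubini_quot_moment_Suc:
  assumes "a \<ge> 1" "b \<ge> 1"
  shows "fubini_quot_moment (Suc a) b = - fubini_quot_moment a (Suc b)"
proof -
  let ?A = "X_poly * one_minus_X * fubini_quot a"
  let ?B = "X_poly * one_minus_X * fubini_quot b"
  have "fubini_quot_moment (Suc a) b = integral01 (?B * pderiv ?A)"
    by (simp add: fubini_quot_moment_def fubini_quot_Suc[OF assms(1)] algebra_simps)
  also have "\<dots> = - integral01 (pderiv ?B * ?A)"
    by (simp add: integral01_by_parts)
  also have "\<dots> = - fubini_quot_moment a (Suc b)"
    by (simp add: fubini_quot_moment_def fubini_quot_Suc[OF assms(2)] algebra_simps)
  finally show ?thesis .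
qed

lemma fubini_quot_moment_1:
  assumes "b \<ge> 1"
  shows "fubini_quot_moment 1 b = bernoulli (Suc b)"
proof -
  have "fubini_quot_moment 1 b = - integral01 (X_poly * one_minus_X * fubini_quot b)"
    by (simp add: fubini_quot_moment_def fubini_quot_1 integral01_uminus)
  also have "integral01 (X_poly * one_minus_X * fubini_quot b)
      = integral01 (one_minus_X * pderiv (X_poly * one_minus_X * fubini_quot b))"
    by (simp add: integral01_by_parts pderiv_diff integral01_uminus)
  also have "one_minus_X * pderiv (X_poly * one_minus_X * fubini_quot b)
      = fubini_quot (Suc b) - fubini_poly (Suc b)"
    unfolding fubini_quot_Suc[OF assms, symmetric]
    by (simp add: fubini_poly_eq_X_poly_mult_fubini_quot one_minus_X_eq algebra_simps)
  finally show ?thesis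
    using assms by (simp add: integral01_diff integral01_fubini_quot integral01_fubini_poly)
qed

lemma fubini_quot_moment_closed:
  assumes "a \<ge> 1" "b \<ge> 1"
  shows "fubini_quot_moment a b = (-1) ^ (a - 1) * bernoulli (a + b)"
  using assms
proof (induction a arbitrary: b rule: dec_induct)
  case base
  then show ?case
    using fubini_quot_moment_1[of b] by simp
next
  case (step a)
  then have "fubini_quot_moment (Suc a) b = - fubini_quot_moment a (Suc b)"
    by (simp add: fubini_quot_moment_Suc)
  also have "\<dots> = (-1) ^ (Suc a - 1) * bernoulli (Suc a + b)"
    using step by (cases a) simp_all
  finally show ?case .
qed

lemma fubini_moment_closed:
  assumes "a \<ge> 1" "b \<ge> 1" "even (a + b)"
  shows "fubini_moment a b = (-1) ^ (a - 1) * bernoulli (a + b) / 2"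
proof -
  let ?p = "X_poly * one_minus_X * fubini_quot a * fubini_quot b"
  have sign: "(-1::real) ^ Suc a * (-1) ^ Suc b = 1"
    using assms(3) by (simp add: power_add[symmetric])
  have left: "fubini_moment a b = integral01 (X_poly * ?p)"
    by (simp add: fubini_moment_def fubini_poly_eq_X_poly_mult_fubini_quot[OF assms(1)]
        fubini_poly_eq_X_poly_mult_fubini_quot[OF assms(2)] ac_simps)
  also have "\<dots> = integral01 (pcompose (X_poly * ?p) one_minus_X)"
    by (rule integral01_reflect[symmetric])
  also have "pcompose (X_poly * ?p) one_minus_X = one_minus_X * ?p"
    using sign
    by (simp add: pcompose_mult fubini_quot_reflect[OF assms(1)] fubini_quot_reflect[OF assms(2)]
        ac_simps)
  finally have right: "fubini_moment a b = integral01 (one_minus_X * ?p)" .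
  have "fubini_moment a b + fubini_moment a b = integral01 ((X_poly + one_minus_X) * ?p)"
    by (subst (1) left, subst right) (simp add: distrib_right integral01_add)
  also have "\<dots> = fubini_quot_moment a b"
    by (simp add: X_poly_add_one_minus_X fubini_quot_moment_def)
  finally show ?thesis
    using fubini_quot_moment_closed[OF assms(1,2)] by simp
qed

lemma fubini_moment_0:
  assumes "N \<ge> 1" "even N"
  shows "fubini_moment 0 N = 0"
proof -
  have "fubini_moment 0 N = integral01 (X_poly * one_minus_X * fubini_quot N)"
    by (simp add: fubini_moment_def fubini_poly_0
        fubini_poly_eq_X_poly_mult_fubini_quot[OF assms(1)] ac_simps)
  also have "\<dots> = 0"
    using assms by (intro integral01_eq_0_if_reflect_odd)
      (simp add: pcompose_mult fubini_quot_reflect ac_simps)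
  finally show ?thesis .
qed

lemma harmonic_moment_closed:
  assumes "n > 1" "m \<ge> 1" "odd (n + m)"
  shows "harmonic_moment n m = (-1) ^ (n - 1) * ((real n - 1) / 2) * bernoulli (n + m - 1)"
proof -
  define N where "N = n + m - 1"
  obtain n' where n: "n = Suc n'" "n' \<ge> 1"
    using assms(1) by (cases n) auto
  have N: "N \<ge> 1" "even N"
    using assms by (auto simp: N_def n)
  have "harmonic_moment n m
      = (-1) ^ n * fubini_moment 0 N
        + (\<Sum>j<n'. (-1) ^ (n + Suc j) * fubini_moment (Suc j) (N - Suc j))"
    by (simp add: harmonic_moment_eq_sum N_def n sum.lessThan_Suc_shift del: sum.lessThan_Suc)
  also have "fubini_moment 0 N = 0"
    using N by (rule fubini_moment_0)
  also have "(\<Sum>j<n'. (-1) ^ (n + Suc j) * fubini_moment (Suc j) (N - Suc j))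
      = (\<Sum>j<n'. (-1) ^ (n - 1) * bernoulli N / 2)"
  proof (rule sum.cong[OF refl])
    fix j
    assume "j \<in> {..<n'}"
    then have "fubini_moment (Suc j) (N - Suc j) = (-1) ^ j * bernoulli N / 2"
      using fubini_moment_closed[of "Suc j" "N - Suc j"] N assms(2) by (simp add: N_def n)
    moreover have "(-1::real) ^ (n + Suc j) * (-1) ^ j = (-1) ^ (n - 1)"
    proof -
      have "(-1::real) ^ (n + Suc j) * (-1) ^ j = (-1) ^ (n + Suc j + j)"
        by (simp only: power_add)
      also have "n + Suc j + j = n' + 2 * Suc j"
        using n by simp
      also have "(-1::real) ^ (n' + 2 * Suc j) = (-1) ^ (n - 1)"
        by (simp add: n power_add power_mult)
      finally show ?thesis .
    qed
    ultimately show "(-1) ^ (n + Suc j) * fubini_moment (Suc j) (N - Suc j)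
        = (-1) ^ (n - 1) * bernoulli N / 2"
      by (metis mult.assoc times_divide_eq_right)
  qed
  finally show ?thesis
    by (simp add: N_def n)
qed

lemma harmonic_moment_eq_double_sum:
  assumes "m \<ge> 1"
  shows "harmonic_moment n m
    = (\<Sum>j=1..n. \<Sum>k=1..m. (-1) ^ (k + j) * real (Stirling n j) * real (Stirling m k)
         * (fact j * fact k * harm j) / (real (k + j) * real (k + j + 1)))"
proof -
  define f where
    "f j = (-1) ^ Suc j * real (Stirling n (Suc j)) * fact (Suc j) * harm (Suc j)" for j
  define g where "g k = (-1) ^ k * real (Stirling m k) * fact k" for k
  have "harmonic_fubini_quot n * fubini_poly m = (\<Sum>j<n. \<Sum>k\<le>m. monom (f j * g k) (j + k))"
    unfolding harmonic_fubini_quot_def fubini_poly_def sum_product mult_monom f_def g_def ..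
  then have "harmonic_moment n m
      = (\<Sum>j<n. \<Sum>k\<le>m. f j * g k / (real (Suc (j + k)) * real (Suc (Suc (j + k)))))"
    by (simp add: harmonic_moment_def mult.assoc sum_distrib_left integral01_sum
        integral01_one_minus_X_mult_monom del: of_nat_Suc)
  also have "\<dots> = (\<Sum>j<n. \<Sum>k=1..m. f j * g k / (real (Suc (j + k)) * real (Suc (Suc (j + k)))))"
  proof (rule sum.cong[OF refl])
    fix j
    have "{..m} = insert 0 {1..m}" by auto
    moreover have "g 0 = 0"
      using assms by (cases m) (simp_all add: g_def)
    ultimately show "(\<Sum>k\<le>m. f j * g k / (real (Suc (j + k)) * real (Suc (Suc (j + k)))))
        = (\<Sum>k=1..m. f j * g k / (real (Suc (j + k)) * real (Suc (Suc (j + k)))))"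
      by simp
  qed
  also have "\<dots> = (\<Sum>j=1..n. \<Sum>k=1..m. (-1) ^ (k + j) * real (Stirling n j) * real (Stirling m k)
         * (fact j * fact k * harm j) / (real (k + j) * real (k + j + 1)))"
    by (rule sum.reindex_bij_witness[of _ "\<lambda>j. j - 1" Suc])
       (auto simp: f_def g_def power_add ac_simps intro!: sum.cong)
  finally show ?thesis .
qed

theorem corollary1:
  shows "(\<forall>n::nat. n \<ge> 1 \<longrightarrow>
            (\<Sum>k=1..n. (-1) ^ (k - 1) * real (Stirling n k) * fact (k - 1) * harm k)
              = bernoulli (n - 1))
       \<and> (\<forall>n m :: nat. n > 1 \<longrightarrow> m \<ge> 1 \<longrightarrow> odd (n + m) \<longrightarrow>
            (-1) ^ (n - 1) * ((real n - 1) / 2) * bernoulli (n + m - 1)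
              = (\<Sum>j=1..n. \<Sum>k=1..m. (-1) ^ (k + j) * real (Stirling n j) * real (Stirling m k)
                   * (fact j * fact k * harm j) / (real (k + j) * real (k + j + 1))))"
  using sum_Stirling_fact_harm harmonic_moment_closed harmonic_moment_eq_double_sum by simp

end
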